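(* Let $p,q,l,N\in\mathbb{Z}_{\geq 0}$, $s=p+q$, and let $M=(M_1,\dots,M_s)\in\mathrm{Sym}_N^{p}\times\mathrm{Alt}_N^{q}$. Suppose there is a subspace $V\subseteq\mathbb{C}^N$ of dimension $2^sl$ such that $M_1V+\dots+M_sV$ has dimension $s2^sl$. Then there is $g\in\mathrm{GL}_N(\mathbb{C})$ such that for each $i\in\{1,\dots,s\}$, the $N\times l$ matrix formed by the first $l$ columns of $gM_ig^T$ has the following block form (blocks of $l$ rows each, followed by a final block of $N-(s+1)l$ rows): the first block is $0_{l\times l}$, the $(i+1)$-st block is the identity $\mathrm{Id}_l$, all other blocks of size $l\times l$ are $0$, and the final $(N-(s+1)l)\times l$ block is $0$.
   Context: $\mathrm{Sym}_N$ and $\mathrm{Alt}_N$ denote the spaces of symmetric, respectively skew-symmetric, complex $N\times N$ matrices; the first $p$ entries of $M$ are symmetric and the last $q$ are skew-symmetric. *)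

theory Defs
  imports Jordan_Normal_Form.VS_Connect
begin

abbreviation cvec_space :: "nat \<Rightarrow> (complex, complex vec) module" where
  "cvec_space N \<equiv> module_vec TYPE(complex) N"

definition csubspace :: "nat \<Rightarrow> complex vec set \<Rightarrow> bool" where
  "csubspace N W \<longleftrightarrow> subspace class_ring W (cvec_space N)"

definition cdim :: "nat \<Rightarrow> complex vec set \<Rightarrow> nat" where
  "cdim N W = vectorspace.dim class_ring ((cvec_space N)\<lparr>carrier := W\<rparr>)"

text \<open>The sum of images M_1 V + ... + M_s V (as a subset of C^N).\<close>
definition img_sum :: "nat \<Rightarrow> complex mat list \<Rightarrow> complex vec set \<Rightarrow> complex vec set" where
  "img_sum N Ms V =
     {foldr (+) (map2 (\<lambda>A v. A *\<^sub>v v) Ms vs) (0\<^sub>v N) | vs. length vs = length Ms \<and> set vs \<subseteq> V}"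

end

theory Submission
  imports Defs Jordan_Normal_Form.DL_Rank
begin

text \<open>
  Every symmetric or alternating form on C^d has a totally isotropic subspace of dimension
  d div 2: take an isotropic vector v, a complement of v inside its orthogonal, and recurse
  there. Halving s = p + q times inside V gives an l-dimensional subspace U that is totally
  isotropic for all M_i at once. As dim (M_1 V + ... + M_s V) = s dim V, the columns of
  W = [M_1 U | ... | M_s U] are linearly independent, and isotropy says W^T U = 0. So there is a
  basis H of C^N whose first l columns span U and with W^T H = [0 | 1 | 0]. Finally
  (H^T M_i H)_(r,c) = (W^T H)_(i l + c, r), so g = H^T has the required form.
\<close>

section \<open>Matrices with trivial kernel\<close>

definition inj_mat :: "'a::field mat \<Rightarrow> bool" where
  "inj_mat A \<longleftrightarrow>
     (\<forall>v \<in> carrier_vec (dim_col A). A *\<^sub>v v = 0\<^sub>v (dim_row A) \<longrightarrow> v = 0\<^sub>v (dim_col A))"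

lemma inj_matI:
  assumes "A \<in> carrier_mat n m" "\<And>v. v \<in> carrier_vec m \<Longrightarrow> A *\<^sub>v v = 0\<^sub>v n \<Longrightarrow> v = 0\<^sub>v m"
  shows "inj_mat A"
  using assms unfolding inj_mat_def by auto

lemma inj_matD:
  assumes "inj_mat A" "A \<in> carrier_mat n m" "v \<in> carrier_vec m" "A *\<^sub>v v = 0\<^sub>v n"
  shows "v = 0\<^sub>v m"
  using assms unfolding inj_mat_def by auto

lemma inj_mat_mult:
  assumes A: "A \<in> carrier_mat n m" and B: "B \<in> carrier_mat m k"
    and "inj_mat A" "inj_mat B"
  shows "inj_mat (A * B)"
proof (rule inj_matI)
  show "A * B \<in> carrier_mat n k" using A B by auto
  fix v assume v: "v \<in> carrier_vec k" and "A * B *\<^sub>v v = 0\<^sub>v n"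
  hence "A *\<^sub>v (B *\<^sub>v v) = 0\<^sub>v n" using A B by auto
  hence "B *\<^sub>v v = 0\<^sub>v m" using inj_matD[OF \<open>inj_mat A\<close> A] B v by auto
  thus "v = 0\<^sub>v k" using inj_matD[OF \<open>inj_mat B\<close> B v] by auto
qed

lemma mat_kernel_nonzero_if_wide:
  fixes A :: "'a::field mat"
  assumes A: "A \<in> carrier_mat n m" and nm: "n < m"
  shows "\<exists>v \<in> carrier_vec m. v \<noteq> 0\<^sub>v m \<and> A *\<^sub>v v = 0\<^sub>v n"
proof -
  \<comment> \<open>pad A with zero rows to a singular square matrix\<close>
  define A' where "A' = mat\<^sub>r m m (\<lambda>i. if i = n then 0\<^sub>v m else if i < n then row A i else 0\<^sub>v m)"
  have A': "A' \<in> carrier_mat m m" by (simp add: A'_def)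
  have "det A' = 0" unfolding A'_def by (rule det_row_0[OF nm]) (use A in auto)
  then obtain v where v: "v \<in> carrier_vec m" "v \<noteq> 0\<^sub>v m" "A' *\<^sub>v v = 0\<^sub>v m"
    using det_0_iff_vec_prod_zero_field[OF A'] by auto
  have "A *\<^sub>v v = 0\<^sub>v n"
  proof (rule eq_vecI)
    fix i assume "i < dim_vec (0\<^sub>v n)"
    hence i: "i < n" by simp
    have "(A *\<^sub>v v) $ i = (A' *\<^sub>v v) $ i" using i nm A by (auto simp: A'_def)
    thus "(A *\<^sub>v v) $ i = 0\<^sub>v n $ i" using v(3) i nm by auto
  qed (use A in auto)
  thus ?thesis using v by auto
qed

lemma inj_mat_dim_le:
  assumes "A \<in> carrier_mat n m" "inj_mat A"
  shows "m \<le> n"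
  using mat_kernel_nonzero_if_wide[OF assms(1)] inj_matD[OF assms(2,1)] by force

lemma inj_mat_iff_det_nonzero:
  assumes "A \<in> carrier_mat n n"
  shows "inj_mat A \<longleftrightarrow> det A \<noteq> 0"
  using det_0_iff_vec_prod_zero_field[OF assms] assms unfolding inj_mat_def by auto

lemma inverse_mat_if_det_nonzero:
  fixes A :: "'a::field mat"
  assumes "A \<in> carrier_mat n n" "det A \<noteq> 0"
  shows "\<exists>B \<in> carrier_mat n n. A * B = 1\<^sub>m n \<and> B * A = 1\<^sub>m n"
  using det_non_zero_imp_unit[OF assms, of "()"] unfolding Units_def ring_mat_def by auto

lemma invertible_mat_if_det_nonzero:
  fixes A :: "'a::field mat"
  assumes "A \<in> carrier_mat n n" "det A \<noteq> 0"
  shows "invertible_mat A"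
  using inverse_mat_if_det_nonzero[OF assms] assms(1)
  unfolding invertible_mat_def inverts_mat_def by auto

lemma mult_mat_vec_zero: "A \<in> carrier_mat n m \<Longrightarrow> A *\<^sub>v 0\<^sub>v m = 0\<^sub>v n"
  by (rule eq_vecI) auto

lemma zero_vec_append: "0\<^sub>v (m + k) = 0\<^sub>v m @\<^sub>v 0\<^sub>v k"
  by (rule eq_vecI) auto

section \<open>Concatenation of columns\<close>

definition append_cols :: "'a mat \<Rightarrow> 'a mat \<Rightarrow> 'a mat" (infixr \<open>@\<^sub>c\<close> 65) where
  "A @\<^sub>c B = mat (dim_row A) (dim_col A + dim_col B)
     (\<lambda>(i,j). if j < dim_col A then A $$ (i,j) else B $$ (i, j - dim_col A))"

lemma append_cols_carrier[simp]:
  "A \<in> carrier_mat n m \<Longrightarrow> B \<in> carrier_mat n k \<Longrightarrow> A @\<^sub>c B \<in> carrier_mat n (m + k)"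
  unfolding append_cols_def by auto

lemma index_append_cols:
  "i < dim_row A \<Longrightarrow> j < dim_col A + dim_col B \<Longrightarrow>
   (A @\<^sub>c B) $$ (i,j) = (if j < dim_col A then A $$ (i,j) else B $$ (i, j - dim_col A))"
  "dim_row (A @\<^sub>c B) = dim_row A" "dim_col (A @\<^sub>c B) = dim_col A + dim_col B"
  unfolding append_cols_def by auto

lemma row_append_cols:
  assumes "A \<in> carrier_mat n m" "B \<in> carrier_mat n k" "i < n"
  shows "row (A @\<^sub>c B) i = row A i @\<^sub>v row B i"
  by (rule eq_vecI) (use assms in \<open>auto simp: index_append_cols\<close>)

lemma col_append_cols:
  assumes "A \<in> carrier_mat n m" "B \<in> carrier_mat n k" "j < m + k"
  shows "col (A @\<^sub>c B) j = (if j < m then col A j else col B (j - m))"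
  by (rule eq_vecI) (use assms in \<open>auto simp: index_append_cols\<close>)

lemma append_cols_mult_vec:
  assumes A: "A \<in> carrier_mat n m" and B: "B \<in> carrier_mat n k"
    and x: "x \<in> carrier_vec m" and y: "y \<in> carrier_vec k"
  shows "(A @\<^sub>c B) *\<^sub>v (x @\<^sub>v y) = A *\<^sub>v x + B *\<^sub>v y"
proof (rule eq_vecI)
  fix i assume "i < dim_vec (A *\<^sub>v x + B *\<^sub>v y)"
  hence i: "i < n" using A B by auto
  have "row (A @\<^sub>c B) i = row A i @\<^sub>v row B i" by (rule row_append_cols[OF A B i])
  hence "((A @\<^sub>c B) *\<^sub>v (x @\<^sub>v y)) $ i = row A i \<bullet> x + row B i \<bullet> y"
    using A B x y i by (simp add: index_append_cols scalar_prod_append[of _ m _ k])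
  thus "((A @\<^sub>c B) *\<^sub>v (x @\<^sub>v y)) $ i = (A *\<^sub>v x + B *\<^sub>v y) $ i" using i A B by auto
qed (use A B in \<open>auto simp: index_append_cols\<close>)

lemma mult_append_cols:
  assumes "X \<in> carrier_mat r n" "A \<in> carrier_mat n m" "B \<in> carrier_mat n k"
  shows "X * (A @\<^sub>c B) = (X * A) @\<^sub>c (X * B)"
  by (rule eq_matI) (use assms in \<open>auto simp: index_append_cols col_append_cols\<close>)

lemma append_cols_assoc:
  assumes "A \<in> carrier_mat n m" "B \<in> carrier_mat n k" "C \<in> carrier_mat n t"
  shows "(A @\<^sub>c B) @\<^sub>c C = A @\<^sub>c (B @\<^sub>c C)"
  by (rule eq_matI) (use assms in \<open>auto simp: index_append_cols\<close>)

lemma col_append_rows: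
  assumes "A \<in> carrier_mat m n" "B \<in> carrier_mat k n" "j < n"
  shows "col (A @\<^sub>r B) j = col A j @\<^sub>v col B j"
  by (rule eq_vecI) (use assms in \<open>auto simp: append_rows_def\<close>)

lemma append_cols_mult_append_rows:
  fixes A B C D :: "'a::comm_ring mat"
  assumes A: "A \<in> carrier_mat n m" and B: "B \<in> carrier_mat n k"
    and C: "C \<in> carrier_mat m q" and D: "D \<in> carrier_mat k q"
  shows "(A @\<^sub>c B) * (C @\<^sub>r D) = A * C + B * D"
proof (rule eq_matI)
  fix i j assume "i < dim_row (A * C + B * D)" "j < dim_col (A * C + B * D)"
  hence ij: "i < n" "j < q" using B D by auto
  have AB: "A @\<^sub>c B \<in> carrier_mat n (m + k)" and CD: "C @\<^sub>r D \<in> carrier_mat (m + k) q"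
    using A B C D by auto
  have "((A @\<^sub>c B) * (C @\<^sub>r D)) $$ (i,j) = (row A i @\<^sub>v row B i) \<bullet> (col C j @\<^sub>v col D j)"
    using AB CD ij by (simp add: row_append_cols[OF A B] col_append_rows[OF C D])
  also have "\<dots> = row A i \<bullet> col C j + row B i \<bullet> col D j"
    by (rule scalar_prod_append[of _ m _ k]) (use A B C D ij in auto)
  finally show "((A @\<^sub>c B) * (C @\<^sub>r D)) $$ (i,j) = (A * C + B * D) $$ (i,j)" using A B C D ij by simp
qed (use A B C D in \<open>auto simp: index_append_cols(2,3) append_rows_def\<close>)

lemma mat_of_single_col_carrier: "mat_of_cols n [v] \<in> carrier_mat n 1"
  using mat_of_cols_carrier(1)[of n "[v]"] by simp

lemma mat_of_single_col_mult_vec: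
  fixes v :: "'a::comm_semiring_0 vec"
  assumes "v \<in> carrier_vec n" "y \<in> carrier_vec 1"
  shows "mat_of_cols n [v] *\<^sub>v y = (y $ 0) \<cdot>\<^sub>v v"
proof (rule eq_vecI)
  fix i assume "i < dim_vec ((y $ 0) \<cdot>\<^sub>v v)"
  hence i: "i < n" using assms by simp
  have "(mat_of_cols n [v] *\<^sub>v y) $ i = (\<Sum>t<1. mat_of_cols n [v] $$ (i,t) * y $ t)"
    using i assms by (simp add: scalar_prod_def lessThan_atLeast0 row_def)
  thus "(mat_of_cols n [v] *\<^sub>v y) $ i = ((y $ 0) \<cdot>\<^sub>v v) $ i"
    using i assms by (simp add: mat_of_cols_index mult.commute)
qed (use assms in auto)

section \<open>Extending matrices with trivial kernel\<close>

lemma in_image_if_not_inj_append_col: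
  fixes A :: "'a::field mat"
  assumes A: "A \<in> carrier_mat n m" and "inj_mat A" and w: "w \<in> carrier_vec n"
    and "\<not> inj_mat (A @\<^sub>c mat_of_cols n [w])"
  shows "\<exists>y \<in> carrier_vec m. A *\<^sub>v y = w"
proof -
  have W: "mat_of_cols n [w] \<in> carrier_mat n 1" using mat_of_single_col_carrier .
  have "A @\<^sub>c mat_of_cols n [w] \<in> carrier_mat n (m + 1)" using append_cols_carrier[OF A W] .
  then obtain v where v: "v \<in> carrier_vec (m + 1)" "v \<noteq> 0\<^sub>v (m + 1)"
    "(A @\<^sub>c mat_of_cols n [w]) *\<^sub>v v = 0\<^sub>v n"
    using assms(4) unfolding inj_mat_def by auto
  define x c where "x = vec_first v m" and "c = vec_last v 1 $ 0"
  have x: "x \<in> carrier_vec m" unfolding x_def by auto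
  have v_split: "v = x @\<^sub>v vec_last v 1" unfolding x_def using v(1) by simp
  have eq: "A *\<^sub>v x + c \<cdot>\<^sub>v w = 0\<^sub>v n"
    using v(3) append_cols_mult_vec[OF A W x, of "vec_last v 1"]
      mat_of_single_col_mult_vec[OF w] v_split unfolding c_def by auto
  have "c \<noteq> 0"
  proof
    assume "c = 0"
    hence "c \<cdot>\<^sub>v w = 0\<^sub>v n" using w by (intro eq_vecI) auto
    hence "A *\<^sub>v x = 0\<^sub>v n" using eq A x by auto
    hence "x = 0\<^sub>v m" using inj_matD[OF \<open>inj_mat A\<close> A x] by auto
    moreover have "vec_last v 1 = 0\<^sub>v 1" using \<open>c = 0\<close> by (intro eq_vecI) (auto simp: c_def)
    ultimately show False using v(2) v_split by auto
  qed
  have "A *\<^sub>v ((- 1 / c) \<cdot>\<^sub>v x) = w"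
  proof (rule eq_vecI)
    fix i assume "i < dim_vec w"
    hence i: "i < n" using w by simp
    have "(A *\<^sub>v x) $ i + c * w $ i = 0" using arg_cong[OF eq, of "\<lambda>u. u $ i"] i A w by simp
    hence Ax: "(A *\<^sub>v x) $ i = - (c * w $ i)" by (metis eq_neg_iff_add_eq_0)
    have "A *\<^sub>v ((- 1 / c) \<cdot>\<^sub>v x) = (- 1 / c) \<cdot>\<^sub>v (A *\<^sub>v x)"
      by (rule mult_mat_vec[OF A x])
    hence "(A *\<^sub>v ((- 1 / c) \<cdot>\<^sub>v x)) $ i = (- 1 / c) * (A *\<^sub>v x) $ i"
      using i A by (metis dim_mult_mat_vec carrier_matD(1) index_smult_vec(1))
    also have "\<dots> = w $ i" unfolding Ax using \<open>c \<noteq> 0\<close> by simp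
    finally show "(A *\<^sub>v ((- 1 / c) \<cdot>\<^sub>v x)) $ i = w $ i" .
  qed (use A w in auto)
  thus ?thesis using x by (intro bexI[of _ "(- 1 / c) \<cdot>\<^sub>v x"]) auto
qed

lemma inj_mat_append_unit_col:
  fixes A :: "'a::field mat"
  assumes A: "A \<in> carrier_mat n m" and "inj_mat A" and mn: "m < n"
  shows "\<exists>j<n. inj_mat (A @\<^sub>c mat_of_cols n [unit_vec n j])"
proof (rule ccontr)
  assume "\<not> ?thesis"
  hence "\<forall>j<n. \<exists>y \<in> carrier_vec m. A *\<^sub>v y = unit_vec n j"
    using in_image_if_not_inj_append_col[OF A \<open>inj_mat A\<close>] by auto
  then obtain y where y: "\<And>j. j < n \<Longrightarrow> y j \<in> carrier_vec m \<and> A *\<^sub>v y j = unit_vec n j"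
    by metis
  \<comment> \<open>then A has a right inverse C, which is wide and hence has a nonzero kernel vector\<close>
  define C where "C = mat_of_cols m (map y [0..<n])"
  have C: "C \<in> carrier_mat m n" unfolding C_def by auto
  have "A * C = 1\<^sub>m n"
  proof (rule eq_matI)
    fix i j assume "i < dim_row (1\<^sub>m n)" "j < dim_col (1\<^sub>m n)"
    hence ij: "i < n" "j < n" by auto
    have "col C j = y j" using ij y unfolding C_def by simp
    hence "(A * C) $$ (i,j) = (A *\<^sub>v y j) $ i" using A C ij by simp
    thus "(A * C) $$ (i,j) = 1\<^sub>m n $$ (i,j)" using y ij by simp
  qed (use A C in auto)
  obtain d where d: "d \<in> carrier_vec n" "d \<noteq> 0\<^sub>v n" "C *\<^sub>v d = 0\<^sub>v m"
    using mat_kernel_nonzero_if_wide[OF C mn] by auto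
  have "d = (A * C) *\<^sub>v d" using \<open>A * C = 1\<^sub>m n\<close> d by auto
  also have "\<dots> = 0\<^sub>v n" using A C d by auto
  finally show False using d(2) by simp
qed

lemma inj_mat_extend_square:
  fixes A :: "'a::field mat"
  assumes "A \<in> carrier_mat n m" "inj_mat A"
  shows "\<exists>B \<in> carrier_mat n (n - m). inj_mat (A @\<^sub>c B)"
  using assms
proof (induction "n - m" arbitrary: A m)
  case 0
  hence "m = n" using inj_mat_dim_le[OF 0(2,3)] by simp
  moreover have "A @\<^sub>c 0\<^sub>m n 0 = A" using 0 by (intro eq_matI) (auto simp: index_append_cols)
  ultimately show ?case using 0 by (intro bexI[of _ "0\<^sub>m n 0"]) auto
next
  case (Suc k)
  hence mn: "m < n" by auto
  define e :: "nat \<Rightarrow> 'a mat" where "e j = mat_of_cols n [unit_vec n j]" for j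
  have e: "e j \<in> carrier_mat n 1" for j unfolding e_def by (rule mat_of_single_col_carrier)
  obtain j where inj: "inj_mat (A @\<^sub>c e j)"
    using inj_mat_append_unit_col[OF Suc(3,4) mn] unfolding e_def by auto
  have "k = n - (m + 1)" using Suc(2) by simp
  from Suc(1)[OF this append_cols_carrier[OF Suc(3) e] inj]
  obtain B where B: "B \<in> carrier_mat n (n - (m + 1))" "inj_mat ((A @\<^sub>c e j) @\<^sub>c B)"
    by blast
  have "1 + (n - (m + 1)) = n - m" using mn by simp
  hence "e j @\<^sub>c B \<in> carrier_mat n (n - m)" using append_cols_carrier[OF e B(1)] by metis
  moreover have "inj_mat (A @\<^sub>c (e j @\<^sub>c B))" using B(2) append_cols_assoc[OF Suc(3) e B(1)] by simp
  ultimately show ?case by blast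
qed

lemma inj_mat_left_inverse:
  fixes W :: "'a::field mat"
  assumes W: "W \<in> carrier_mat n k" and "inj_mat W"
  shows "\<exists>D \<in> carrier_mat k n. D * W = 1\<^sub>m k"
proof -
  have kn: "k \<le> n" using inj_mat_dim_le[OF assms] .
  obtain B where B: "B \<in> carrier_mat n (n - k)" "inj_mat (W @\<^sub>c B)"
    using inj_mat_extend_square[OF assms] by auto
  have S: "W @\<^sub>c B \<in> carrier_mat n n" using append_cols_carrier[OF W B(1)] kn by simp
  have "det (W @\<^sub>c B) \<noteq> 0" using B(2) inj_mat_iff_det_nonzero[OF S] by simp
  then obtain T where T: "T \<in> carrier_mat n n" "T * (W @\<^sub>c B) = 1\<^sub>m n"
    using inverse_mat_if_det_nonzero[OF S] by auto
  define D where "D = mat k n (\<lambda>(i,j). T $$ (i,j))"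
  have D: "D \<in> carrier_mat k n" by (simp add: D_def)
  have "D * W = 1\<^sub>m k"
  proof (rule eq_matI)
    fix i j assume i: "i < dim_row (1\<^sub>m k)" and j: "j < dim_col (1\<^sub>m k)"
    hence ij: "i < k" "j < k" by auto
    have rD: "row D i = row T i" using ij kn T by (intro eq_vecI) (auto simp: D_def)
    have cW: "col W j = col (W @\<^sub>c B) j" using col_append_cols[OF W B(1), of j] ij kn by auto
    have "(D * W) $$ (i,j) = row T i \<bullet> col (W @\<^sub>c B) j" using ij D W rD cW by auto
    also have "\<dots> = (T * (W @\<^sub>c B)) $$ (i,j)" using ij kn T S by (subst index_mult_mat) auto
    finally show "(D * W) $$ (i,j) = 1\<^sub>m k $$ (i,j)" using T(2) ij kn by auto
  qed (insert D W, auto)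
  thus ?thesis using D by auto
qed

lemma inj_mat_append_cols_mult:
  fixes A B C :: "'a::field mat"
  assumes A: "A \<in> carrier_mat n m" and B: "B \<in> carrier_mat n k" and C: "C \<in> carrier_mat k l"
    and AB: "inj_mat (A @\<^sub>c B)" and "inj_mat C"
  shows "inj_mat (A @\<^sub>c (B * C))"
proof (rule inj_matI)
  show "A @\<^sub>c (B * C) \<in> carrier_mat n (m + l)" using A B C by simp
  fix x assume x: "x \<in> carrier_vec (m + l)" and "(A @\<^sub>c (B * C)) *\<^sub>v x = 0\<^sub>v n"
  define x1 x2 where "x1 = vec_first x m" and "x2 = vec_last x l"
  have x1: "x1 \<in> carrier_vec m" and x2: "x2 \<in> carrier_vec l" and x12: "x = x1 @\<^sub>v x2"
    using x unfolding x1_def x2_def by auto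
  have "(A @\<^sub>c B) *\<^sub>v (x1 @\<^sub>v (C *\<^sub>v x2)) = (A @\<^sub>c (B * C)) *\<^sub>v x"
    using append_cols_mult_vec[OF A B x1, of "C *\<^sub>v x2"] append_cols_mult_vec[OF A _ x1 x2, of "B * C"]
      B C x2 unfolding x12 by simp
  also have "\<dots> = 0\<^sub>v n" by fact
  finally have "x1 @\<^sub>v (C *\<^sub>v x2) = 0\<^sub>v m @\<^sub>v 0\<^sub>v k"
    using inj_matD[OF AB append_cols_carrier[OF A B]] x1 x2 C by (simp add: zero_vec_append)
  hence "x1 = 0\<^sub>v m" "C *\<^sub>v x2 = 0\<^sub>v k" using append_vec_eq[OF x1] by auto
  moreover have "x2 = 0\<^sub>v l" using inj_matD[OF \<open>inj_mat C\<close> C x2] \<open>C *\<^sub>v x2 = 0\<^sub>v k\<close> .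
  ultimately show "x = 0\<^sub>v (m + l)" unfolding x12 zero_vec_append by simp
qed

lemma inj_mat_prepend_col:
  fixes R :: "'a::field mat"
  assumes R: "R \<in> carrier_mat d m" "inj_mat R" and v: "v \<in> carrier_vec d" "j < d" "v $ j \<noteq> 0"
    and row_j: "\<And>t. t < m \<Longrightarrow> R $$ (j,t) = 0"
  shows "inj_mat (mat_of_cols d [v] @\<^sub>c R)"
proof (rule inj_matI)
  have V: "mat_of_cols d [v] \<in> carrier_mat d 1" by (rule mat_of_single_col_carrier)
  show "mat_of_cols d [v] @\<^sub>c R \<in> carrier_mat d (1 + m)" using append_cols_carrier[OF V R(1)] .
  fix x assume x: "x \<in> carrier_vec (1 + m)" and "(mat_of_cols d [v] @\<^sub>c R) *\<^sub>v x = 0\<^sub>v d"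
  define x1 x2 where "x1 = vec_first x 1" and "x2 = vec_last x m"
  have x1: "x1 \<in> carrier_vec 1" and x2: "x2 \<in> carrier_vec m" and x12: "x = x1 @\<^sub>v x2"
    using x unfolding x1_def x2_def by auto
  have eq: "(x1 $ 0) \<cdot>\<^sub>v v + R *\<^sub>v x2 = 0\<^sub>v d"
    using \<open>_ = 0\<^sub>v d\<close> append_cols_mult_vec[OF V R(1) x1 x2] mat_of_single_col_mult_vec[OF v(1) x1]
    unfolding x12 by simp
  have "(R *\<^sub>v x2) $ j = 0"
    using R(1) x2 v(2) row_j by (simp add: scalar_prod_def row_def)
  hence "x1 $ 0 * v $ j = 0" using arg_cong[OF eq, of "\<lambda>u. u $ j"] v R(1) x2 by simp
  hence "x1 $ 0 = 0" using v(3) by simp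
  moreover have "(0::'a) \<cdot>\<^sub>v v = 0\<^sub>v d" using v(1) by (intro eq_vecI) auto
  ultimately have "R *\<^sub>v x2 = 0\<^sub>v d" using eq R(1) x2 by auto
  hence "x2 = 0\<^sub>v m" using inj_matD[OF R(2,1) x2] by simp
  moreover have "x1 = 0\<^sub>v 1" using \<open>x1 $ 0 = 0\<close> x1 by (intro eq_vecI) auto
  ultimately show "x = 0\<^sub>v (1 + m)" unfolding x12 zero_vec_append by simp
qed

lemma inj_mat_append_cols_sub_mult:
  fixes A B C :: "'a::field mat"
  assumes A: "A \<in> carrier_mat n m" and B: "B \<in> carrier_mat n q" and C: "C \<in> carrier_mat m q"
    and AB: "inj_mat (A @\<^sub>c B)"
  shows "inj_mat (A @\<^sub>c (B - A * C))"
proof -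
  have BAC: "B - A * C \<in> carrier_mat n q" by (rule minus_carrier_mat[OF mult_carrier_mat[OF A C]])
  show ?thesis
  proof (rule inj_matI[OF append_cols_carrier[OF A BAC]])
    fix x assume x: "x \<in> carrier_vec (m + q)" and "(A @\<^sub>c (B - A * C)) *\<^sub>v x = 0\<^sub>v n"
    define x1 x2 where "x1 = vec_first x m" and "x2 = vec_last x q"
    have x1: "x1 \<in> carrier_vec m" and x2: "x2 \<in> carrier_vec q" and x12: "x = x1 @\<^sub>v x2"
      using x unfolding x1_def x2_def by auto
    have "(A @\<^sub>c B) *\<^sub>v ((x1 - C *\<^sub>v x2) @\<^sub>v x2) = A *\<^sub>v (x1 - C *\<^sub>v x2) + B *\<^sub>v x2"
      using append_cols_mult_vec[OF A B _ x2] x1 C x2 by simp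
    also have "\<dots> = A *\<^sub>v x1 + (B - A * C) *\<^sub>v x2"
      using A B C x1 x2 by (intro eq_vecI) (auto simp: mult_minus_distrib_mat_vec minus_mult_distrib_mat_vec)
    also have "\<dots> = (A @\<^sub>c (B - A * C)) *\<^sub>v x"
      unfolding x12 by (rule append_cols_mult_vec[OF A BAC x1 x2, symmetric])
    also have "\<dots> = 0\<^sub>v n" by fact
    finally have "(x1 - C *\<^sub>v x2) @\<^sub>v x2 = 0\<^sub>v m @\<^sub>v 0\<^sub>v q"
      using inj_matD[OF AB append_cols_carrier[OF A B]] x1 x2 C by (simp add: zero_vec_append)
    moreover have "x1 - C *\<^sub>v x2 \<in> carrier_vec m" using x1 x2 C by simp
    ultimately have "x1 - C *\<^sub>v x2 = 0\<^sub>v m" "x2 = 0\<^sub>v q" using append_vec_eq[OF _ zero_carrier_vec] by blast+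
    hence "x1 = 0\<^sub>v m" using x1 mult_mat_vec_zero[OF C] by auto
    thus "x = 0\<^sub>v (m + q)" unfolding x12 zero_vec_append using \<open>x2 = 0\<^sub>v q\<close> by simp
  qed
qed

lemma inj_mat_append_cols_dual:
  fixes U W D :: "'a::field mat"
  assumes U: "U \<in> carrier_mat N l" "inj_mat U" and W: "W \<in> carrier_mat N k" and D: "D \<in> carrier_mat k N"
    and WU: "transpose_mat W * U = 0\<^sub>m k l" and DW: "D * W = 1\<^sub>m k"
  shows "inj_mat (U @\<^sub>c transpose_mat D)"
proof (rule inj_matI)
  have DT: "transpose_mat D \<in> carrier_mat N k" using D by simp
  show "U @\<^sub>c transpose_mat D \<in> carrier_mat N (l + k)" using append_cols_carrier[OF U(1) DT] .
  fix x assume x: "x \<in> carrier_vec (l + k)" and "(U @\<^sub>c transpose_mat D) *\<^sub>v x = 0\<^sub>v N"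
  define x1 x2 where "x1 = vec_first x l" and "x2 = vec_last x k"
  have x1: "x1 \<in> carrier_vec l" and x2: "x2 \<in> carrier_vec k" and x12: "x = x1 @\<^sub>v x2"
    using x unfolding x1_def x2_def by auto
  have Ux: "U *\<^sub>v x1 + transpose_mat D *\<^sub>v x2 = 0\<^sub>v N"
    using \<open>_ = 0\<^sub>v N\<close> append_cols_mult_vec[OF U(1) DT x1 x2] unfolding x12 by simp
  have WTD: "transpose_mat W * transpose_mat D = 1\<^sub>m k"
    using transpose_mult[OF D W] DW by simp
  have "transpose_mat W *\<^sub>v (U *\<^sub>v x1 + transpose_mat D *\<^sub>v x2) =
      (transpose_mat W * U) *\<^sub>v x1 + (transpose_mat W * transpose_mat D) *\<^sub>v x2"
    using U(1) W DT x1 x2 by (simp add: mult_add_distrib_mat_vec)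
  also have "\<dots> = x2" unfolding WU WTD using x1 x2 by auto
  finally have "x2 = 0\<^sub>v k" unfolding Ux using W by auto
  hence "U *\<^sub>v x1 = 0\<^sub>v N" using Ux U(1) x1 mult_mat_vec_zero[OF DT] by simp
  hence "x1 = 0\<^sub>v l" by (rule inj_matD[OF U(2,1) x1])
  thus "x = 0\<^sub>v (l + k)" unfolding x12 zero_vec_append using \<open>x2 = 0\<^sub>v k\<close> by simp
qed

lemma adapted_basis:
  fixes U W :: "'a::field mat"
  assumes U: "U \<in> carrier_mat N l" "inj_mat U" and W: "W \<in> carrier_mat N k" "inj_mat W"
    and WU: "transpose_mat W * U = 0\<^sub>m k l"
  shows "\<exists>H \<in> carrier_mat N N. inj_mat H \<and> (\<forall>c<l. col H c = col U c) \<and>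
           (\<forall>a<k. \<forall>r<N. (transpose_mat W * H) $$ (a, r) = (if r = l + a then 1 else 0))"
proof -
  obtain D where D: "D \<in> carrier_mat k N" "D * W = 1\<^sub>m k" using inj_mat_left_inverse[OF W] by blast
  have DT: "transpose_mat D \<in> carrier_mat N k" using D(1) by simp
  have WTD: "transpose_mat W * transpose_mat D = 1\<^sub>m k" using transpose_mult[OF D(1) W(1)] D(2) by simp
  define A where "A = U @\<^sub>c transpose_mat D"
  have A: "A \<in> carrier_mat N (l + k)" "inj_mat A"
    unfolding A_def using append_cols_carrier[OF U(1) DT]
      inj_mat_append_cols_dual[OF U W(1) D(1) WU D(2)] by auto
  have lkN: "l + k \<le> N" by (rule inj_mat_dim_le[OF A])
  define q where "q = N - (l + k)"
  obtain B where B: "B \<in> carrier_mat N q" "inj_mat (A @\<^sub>c B)"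
    using inj_mat_extend_square[OF A] unfolding q_def by blast
  \<comment> \<open>subtract from B its components along the columns of D^T\<close>
  define C where "C = 0\<^sub>m l q @\<^sub>r (transpose_mat W * B)"
  have C: "C \<in> carrier_mat (l + k) q" unfolding C_def using W(1) B(1) by auto
  have AC: "A * C = transpose_mat D * (transpose_mat W * B)"
    using append_cols_mult_append_rows[OF U(1) DT, where C = "0\<^sub>m l q" and D = "transpose_mat W * B"
        and q = q]
      U(1) DT W(1) B(1) unfolding A_def C_def by simp
  define Z where "Z = B - A * C"
  have Z: "Z \<in> carrier_mat N q" unfolding Z_def by (rule minus_carrier_mat[OF mult_carrier_mat[OF A(1) C]])
  define H where "H = A @\<^sub>c Z"
  have H: "H \<in> carrier_mat N N" "inj_mat H"
    unfolding H_def Z_def using append_cols_carrier[OF A(1) Z[unfolded Z_def]] lkN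
      inj_mat_append_cols_sub_mult[OF A(1) B(1) C B(2)] by (auto simp: q_def)
  have "transpose_mat W * Z =
      transpose_mat W * B - (transpose_mat W * transpose_mat D) * (transpose_mat W * B)"
    unfolding Z_def AC using W(1) B(1) DT
    by (simp add: mult_minus_distrib_mat[of _ k N] assoc_mult_mat[of _ k N _ k _ q])
  hence "transpose_mat W * Z = 0\<^sub>m k q" unfolding WTD using W(1) B(1) by simp
  moreover have "transpose_mat W * A = 0\<^sub>m k l @\<^sub>c 1\<^sub>m k"
    unfolding A_def WU[symmetric] WTD[symmetric] using W(1) by (intro mult_append_cols[OF _ U(1) DT]) simp
  ultimately have WH: "transpose_mat W * H = (0\<^sub>m k l @\<^sub>c 1\<^sub>m k) @\<^sub>c 0\<^sub>m k q"
    unfolding H_def using W(1) by (simp add: mult_append_cols[OF _ A(1) Z])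
  have "(transpose_mat W * H) $$ (a, r) = (if r = l + a then 1 else 0)" if "a < k" "r < N" for a r
    using that lkN unfolding WH by (auto simp: index_append_cols q_def)
  moreover have "col H c = col U c" if "c < l" for c
    using that col_append_cols[OF A(1) Z, of c] col_append_cols[OF U(1) DT, of c] lkN
    unfolding H_def A_def by (simp add: q_def)
  ultimately show ?thesis using H by blast
qed

section \<open>Congruence and totally isotropic subspaces\<close>

definition sym_or_skew :: "'a::ring mat \<Rightarrow> bool" where
  "sym_or_skew G \<longleftrightarrow> transpose_mat G = G \<or> transpose_mat G = - G"

lemma congruence_index:
  fixes X G :: "'a::comm_ring mat"
  assumes X: "X \<in> carrier_mat d m" and G: "G \<in> carrier_mat d d" and "a < m" "b < m"
  shows "(transpose_mat X * G * X) $$ (a,b) = col X a \<bullet> (G *\<^sub>v col X b)"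
proof -
  have "transpose_mat X * G * X = transpose_mat X * (G * X)" using X G by (intro assoc_mult_mat) auto
  thus ?thesis using assms by (simp del: col_mult)
qed

lemma sym_or_skew_scalar_prod_zero_swap:
  fixes G :: "'a::comm_ring mat"
  assumes G: "G \<in> carrier_mat d d" "sym_or_skew G"
    and x: "x \<in> carrier_vec d" and y: "y \<in> carrier_vec d" and "x \<bullet> (G *\<^sub>v y) = 0"
  shows "y \<bullet> (G *\<^sub>v x) = 0"
proof -
  have "y \<bullet> (transpose_mat G *\<^sub>v x) = x \<bullet> (G *\<^sub>v y)"
    using transpose_vec_mult_scalar[OF G(1) y x] comm_scalar_prod[OF y, of "transpose_mat G *\<^sub>v x"] G x
    by auto
  thus ?thesis using assms unfolding sym_or_skew_def by auto
qed

lemma transpose_congruence: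
  fixes X M :: "'a::comm_ring mat"
  assumes X: "X \<in> carrier_mat n m" and M: "M \<in> carrier_mat n n"
  shows "transpose_mat (transpose_mat X * M * X) = transpose_mat X * transpose_mat M * X"
proof -
  have "transpose_mat (transpose_mat X * M * X) = transpose_mat X * transpose_mat (transpose_mat X * M)"
    using X M by (subst transpose_mult[of _ m n]) auto
  also have "transpose_mat (transpose_mat X * M) = transpose_mat M * X"
    using X M by (subst transpose_mult[of _ m n]) auto
  finally show ?thesis using X M by (simp add: assoc_mult_mat[of _ m n _ n _ m])
qed

lemma sym_or_skew_congruence:
  fixes X M :: "'a::comm_ring mat"
  assumes X: "X \<in> carrier_mat n m" and M: "M \<in> carrier_mat n n" and "sym_or_skew M"
  shows "sym_or_skew (transpose_mat X * M * X)"
  using assms transpose_congruence[OF X M] unfolding sym_or_skew_def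
  by (auto simp: mult_smult_distrib)

lemma congruence_mult:
  fixes X Q M :: "'a::comm_ring mat"
  assumes X: "X \<in> carrier_mat n a" and Q: "Q \<in> carrier_mat a b" and M: "M \<in> carrier_mat n n"
  shows "transpose_mat (X * Q) * M * (X * Q) = transpose_mat Q * (transpose_mat X * M * X) * Q"
proof -
  have XT: "transpose_mat X \<in> carrier_mat a n" and QT: "transpose_mat Q \<in> carrier_mat b a"
    and XTM: "transpose_mat X * M \<in> carrier_mat a n" and XQ: "X * Q \<in> carrier_mat n b"
    and Z: "transpose_mat X * M * X \<in> carrier_mat a a"
    using X Q M by auto
  have "transpose_mat Q * (transpose_mat X * M * X) * Q = transpose_mat Q * (transpose_mat X * M * X * Q)"
    by (rule assoc_mult_mat[OF QT Z Q])
  also have "transpose_mat X * M * X * Q = transpose_mat X * M * (X * Q)"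
    by (rule assoc_mult_mat[OF XTM X Q])
  also have "transpose_mat Q * (transpose_mat X * M * (X * Q)) = transpose_mat Q * (transpose_mat X * M) * (X * Q)"
    by (rule assoc_mult_mat[OF QT XTM XQ, symmetric])
  also have "transpose_mat Q * (transpose_mat X * M) = transpose_mat (X * Q) * M"
    by (simp add: transpose_mult[OF X Q] assoc_mult_mat[OF QT XT M])
  finally show ?thesis ..
qed

definition totally_isotropic :: "'a::comm_ring mat \<Rightarrow> 'a mat \<Rightarrow> bool" where
  "totally_isotropic G Q \<longleftrightarrow> transpose_mat Q * G * Q = 0\<^sub>m (dim_col Q) (dim_col Q)"

lemma totally_isotropic_iff_cols:
  fixes G Q :: "'a::comm_ring mat"
  assumes Q: "Q \<in> carrier_mat d m" and G: "G \<in> carrier_mat d d"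
  shows "totally_isotropic G Q \<longleftrightarrow> (\<forall>a<m. \<forall>b<m. col Q a \<bullet> (G *\<^sub>v col Q b) = 0)"
proof -
  have QGQ: "transpose_mat Q * G * Q \<in> carrier_mat m m" using Q G by auto
  have "totally_isotropic G Q \<longleftrightarrow> (\<forall>a<m. \<forall>b<m. (transpose_mat Q * G * Q) $$ (a,b) = 0)"
  proof
    assume "totally_isotropic G Q"
    thus "\<forall>a<m. \<forall>b<m. (transpose_mat Q * G * Q) $$ (a,b) = 0"
      using Q unfolding totally_isotropic_def by auto
  next
    assume "\<forall>a<m. \<forall>b<m. (transpose_mat Q * G * Q) $$ (a,b) = 0"
    hence "transpose_mat Q * G * Q = 0\<^sub>m m m" using QGQ by (intro eq_matI) auto
    thus "totally_isotropic G Q" using Q unfolding totally_isotropic_def by auto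
  qed
  thus ?thesis using congruence_index[OF Q G] by simp
qed

lemma totally_isotropic_congruence:
  fixes X Q M :: "'a::comm_ring mat"
  assumes "X \<in> carrier_mat n a" "Q \<in> carrier_mat a b" "M \<in> carrier_mat n n"
  shows "totally_isotropic (transpose_mat X * M * X) Q \<longleftrightarrow> totally_isotropic M (X * Q)"
  using assms congruence_mult[OF assms] unfolding totally_isotropic_def by simp

lemma totally_isotropic_mult:
  fixes G X R :: "'a::comm_ring mat"
  assumes "X \<in> carrier_mat n a" "R \<in> carrier_mat a b" "G \<in> carrier_mat n n" "totally_isotropic G X"
  shows "totally_isotropic G (X * R)"
  using assms totally_isotropic_congruence[OF assms(1-3)] unfolding totally_isotropic_def by simp

lemma totally_isotropic_prepend_col:
  fixes G B :: "'a::comm_ring mat"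
  assumes G: "G \<in> carrier_mat d d" "sym_or_skew G" and v: "v \<in> carrier_vec d" "v \<bullet> (G *\<^sub>v v) = 0"
    and B: "B \<in> carrier_mat d m" "totally_isotropic G B"
    and vB: "\<And>b. b < m \<Longrightarrow> v \<bullet> (G *\<^sub>v col B b) = 0"
  shows "totally_isotropic G (mat_of_cols d [v] @\<^sub>c B)"
proof -
  have V: "mat_of_cols d [v] \<in> carrier_mat d 1" by (rule mat_of_single_col_carrier)
  have Q: "mat_of_cols d [v] @\<^sub>c B \<in> carrier_mat d (1 + m)" using append_cols_carrier[OF V B(1)] .
  have col: "col (mat_of_cols d [v] @\<^sub>c B) a = (if a = 0 then v else col B (a - 1))" if "a < 1 + m" for a
    using col_append_cols[OF V B(1) that] v by simp
  have BB: "col B a \<bullet> (G *\<^sub>v col B b) = 0" if "a < m" "b < m" for a b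
    using B that totally_isotropic_iff_cols[OF B(1) G(1)] by blast
  have Bv: "col B a \<bullet> (G *\<^sub>v v) = 0" if "a < m" for a
    by (rule sym_or_skew_scalar_prod_zero_swap[OF G v(1) _ vB[OF that]]) (use B(1) that in auto)
  show ?thesis unfolding totally_isotropic_iff_cols[OF Q G(1)]
    using col BB Bv vB v(2) by auto
qed

section \<open>Existence of totally isotropic subspaces\<close>

lemma complex_quadratic_form_nontrivial_zero:
  fixes a b c :: complex
  shows "\<exists>x y. (x \<noteq> 0 \<or> y \<noteq> 0) \<and> a * x\<^sup>2 + b * x * y + c * y\<^sup>2 = 0"
proof (cases "c = 0")
  case True
  thus ?thesis by (intro exI[of _ 0] exI[of _ 1]) simp
next
  case False
  define y where "y = (csqrt (b\<^sup>2 - 4 * a * c) - b) / (2 * c)"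
  have "2 * c * y + b = csqrt (b\<^sup>2 - 4 * a * c)" using False by (simp add: y_def)
  hence "(2 * c * y + b)\<^sup>2 = b\<^sup>2 - 4 * a * c" by simp
  hence "4 * c * (a + b * y + c * y\<^sup>2) = 0" by (simp add: algebra_simps power2_eq_square)
  hence "a + b * y + c * y\<^sup>2 = 0" using False by simp
  thus ?thesis by (intro exI[of _ 1] exI[of _ y]) simp
qed

lemma isotropic_vec_exists:
  fixes G :: "complex mat"
  assumes G: "G \<in> carrier_mat d d" and d: "2 \<le> d"
  shows "\<exists>v j. v \<in> carrier_vec d \<and> j < d \<and> v $ j \<noteq> 0 \<and> v \<bullet> (G *\<^sub>v v) = 0"
proof -
  obtain x y where xy: "x \<noteq> 0 \<or> y \<noteq> 0"
    "G $$ (0,0) * x\<^sup>2 + (G $$ (0,1) + G $$ (1,0)) * x * y + G $$ (1,1) * y\<^sup>2 = 0"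
    using complex_quadratic_form_nontrivial_zero by blast
  define v where "v = vec d (\<lambda>i. if i = 0 then x else if i = 1 then y else 0)"
  have v: "v \<in> carrier_vec d" and v01: "v $ 0 = x" "v $ 1 = y" using d by (auto simp: v_def)
  have sum_v: "(\<Sum>i\<in>{0..<d}. v $ i * f i) = x * f 0 + y * f 1" for f :: "nat \<Rightarrow> complex"
  proof -
    have "(\<Sum>i\<in>{0..<d}. v $ i * f i) = (\<Sum>i\<in>{0,1}. v $ i * f i)"
      by (rule sum.mono_neutral_right) (use d in \<open>auto simp: v_def\<close>)
    thus ?thesis using v01 by simp
  qed
  have Gv: "(G *\<^sub>v v) $ i = x * G $$ (i,0) + y * G $$ (i,1)" if "i < d" for i
    using sum_v[of "\<lambda>j. G $$ (i,j)"] that G v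
    by (simp add: scalar_prod_def mult.commute[of "v $ _"])
  have "v \<bullet> (G *\<^sub>v v) = x * (G *\<^sub>v v) $ 0 + y * (G *\<^sub>v v) $ 1"
    using sum_v[of "\<lambda>i. (G *\<^sub>v v) $ i"] G by (simp add: scalar_prod_def)
  also have "\<dots> = 0" using xy(2) Gv d by (simp add: algebra_simps power2_eq_square)
  finally have "v \<bullet> (G *\<^sub>v v) = 0" .
  moreover have "\<exists>j<d. v $ j \<noteq> 0"
  proof (cases "x = 0")
    case True
    thus ?thesis using xy(1) v01 d by (intro exI[of _ 1]) auto
  next
    case False
    thus ?thesis using v01 d by (intro exI[of _ 0]) auto
  qed
  ultimately show ?thesis using v by auto
qed

lemma skip_two_indices:
  fixes j k d :: nat
  assumes "j < d" "k < d" "j \<noteq> k"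
  shows "\<exists>\<sigma>. inj \<sigma> \<and> (\<forall>t < d - 2. \<sigma> t < d \<and> \<sigma> t \<noteq> j \<and> \<sigma> t \<noteq> k)"
proof
  let ?\<sigma> = "\<lambda>t. if t < min j k then t else if t + 1 < max j k then t + 1 else t + 2"
  show "inj ?\<sigma> \<and> (\<forall>t < d - 2. ?\<sigma> t < d \<and> ?\<sigma> t \<noteq> j \<and> ?\<sigma> t \<noteq> k)"
    using assms unfolding inj_def by auto
qed

lemma hyperplane_pivot:
  fixes r v :: "'a::field vec"
  assumes r: "r \<in> carrier_vec d" and v: "v \<in> carrier_vec d" "j < d" "v $ j \<noteq> 0"
    and rv: "r \<bullet> v = 0" and d: "2 \<le> d"
  shows "\<exists>k<d. k \<noteq> j \<and> (r $ k = 0 \<longrightarrow> (\<forall>i<d. r $ i = 0))"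
proof (cases "\<exists>k<d. k \<noteq> j \<and> r $ k \<noteq> 0")
  case True
  thus ?thesis by blast
next
  case False
  hence off_j: "r $ i = 0" if "i < d" "i \<noteq> j" for i using that by auto
  have "r \<bullet> v = (\<Sum>i\<in>{j}. r $ i * v $ i)"
    unfolding scalar_prod_def using v off_j by (intro sum.mono_neutral_right) auto
  hence "r $ j = 0" using rv v(3) by simp
  hence "\<forall>i<d. r $ i = 0" using off_j by metis
  thus ?thesis using d v(2) by (intro exI[of _ "if j = 0 then 1 else 0"]) auto
qed

lemma complement_in_hyperplane:
  fixes r v :: "'a::field vec"
  assumes r: "r \<in> carrier_vec d" and v: "v \<in> carrier_vec d" "j < d" "v $ j \<noteq> 0"
    and rv: "r \<bullet> v = 0" and d: "2 \<le> d"
  shows "\<exists>R \<in> carrier_mat d (d - 2). inj_mat (mat_of_cols d [v] @\<^sub>c R) \<and>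
           (\<forall>y \<in> carrier_vec (d - 2). r \<bullet> (R *\<^sub>v y) = 0)"
proof -
  obtain k where k: "k < d" "k \<noteq> j" "r $ k = 0 \<Longrightarrow> \<forall>i<d. r $ i = 0"
    using hyperplane_pivot[OF assms] by blast
  obtain \<sigma> where \<sigma>: "inj \<sigma>" "\<And>t. t < d - 2 \<Longrightarrow> \<sigma> t < d \<and> \<sigma> t \<noteq> j \<and> \<sigma> t \<noteq> k"
    using skip_two_indices[OF v(2) k(1) k(2)[symmetric]] by blast
  \<comment> \<open>column t is the unit vector at \<sigma> t, corrected at k to lie in the hyperplane;
    if r = 0 then r $ k = 0 and the correction vanishes, as x / 0 = 0\<close>
  define R where "R = mat d (d - 2)
    (\<lambda>(i,t). if i = \<sigma> t then 1 else if i = k then - (r $ \<sigma> t / r $ k) else 0)"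
  have R: "R \<in> carrier_mat d (d - 2)" unfolding R_def by simp
  have "inj_mat R"
  proof (rule inj_matI[OF R])
    fix x assume x: "x \<in> carrier_vec (d - 2)" and "R *\<^sub>v x = 0\<^sub>v d"
    show "x = 0\<^sub>v (d - 2)"
    proof (rule eq_vecI)
      fix t assume "t < dim_vec (0\<^sub>v (d - 2))"
      hence t: "t < d - 2" by simp
      have "(R *\<^sub>v x) $ \<sigma> t = (\<Sum>t'\<in>{0..<d - 2}. R $$ (\<sigma> t, t') * x $ t')"
        using R x \<sigma>(2)[OF t] by (simp add: scalar_prod_def)
      also have "\<dots> = (\<Sum>t'\<in>{t}. R $$ (\<sigma> t, t') * x $ t')"
        using \<sigma> t by (intro sum.mono_neutral_right) (auto simp: R_def inj_eq)
      also have "\<dots> = x $ t" using \<sigma>(2)[OF t] t by (simp add: R_def)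
      finally show "x $ t = 0\<^sub>v (d - 2) $ t" using \<open>R *\<^sub>v x = 0\<^sub>v d\<close> \<sigma>(2)[OF t] t by simp
    qed (use x in auto)
  qed
  moreover have "R $$ (j,t) = 0" if "t < d - 2" for t
    using that \<sigma>(2)[OF that] k(2) v(2) by (simp add: R_def)
  ultimately have "inj_mat (mat_of_cols d [v] @\<^sub>c R)" using inj_mat_prepend_col[OF R _ v] by blast
  moreover have "r \<bullet> (R *\<^sub>v y) = 0" if y: "y \<in> carrier_vec (d - 2)" for y
  proof -
    have "r \<bullet> col R t = 0" if t: "t < d - 2" for t
    proof -
      have "r \<bullet> col R t = (\<Sum>i\<in>{\<sigma> t, k}. r $ i * col R t $ i)"
        unfolding scalar_prod_def using r R \<sigma>(2)[OF t] k t
        by (intro sum.mono_neutral_right) (auto simp: R_def)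
      also have "\<dots> = r $ \<sigma> t - r $ k * (r $ \<sigma> t / r $ k)"
        using \<sigma>(2)[OF t] k t by (simp add: R_def)
      also have "\<dots> = 0" using k(3) \<sigma>(2)[OF t] by (cases "r $ k = 0") auto
      finally show ?thesis .
    qed
    hence "transpose_mat R *\<^sub>v r = 0\<^sub>v (d - 2)"
      using R r by (intro eq_vecI) (auto simp: comm_scalar_prod[of r d])
    thus ?thesis using transpose_vec_mult_scalar[OF R y r] y by simp
  qed
  ultimately show ?thesis using R by blast
qed

lemma isotropic_vec_with_complement:
  fixes G :: "complex mat"
  assumes G: "G \<in> carrier_mat d d" and d: "2 \<le> d"
  shows "\<exists>v R. v \<in> carrier_vec d \<and> v \<bullet> (G *\<^sub>v v) = 0 \<and> R \<in> carrier_mat d (d - 2) \<and>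
           inj_mat (mat_of_cols d [v] @\<^sub>c R) \<and> (\<forall>y \<in> carrier_vec (d - 2). v \<bullet> (G *\<^sub>v (R *\<^sub>v y)) = 0)"
proof -
  obtain v j where v: "v \<in> carrier_vec d" "j < d" "v $ j \<noteq> 0" "v \<bullet> (G *\<^sub>v v) = 0"
    using isotropic_vec_exists[OF G d] by auto
  \<comment> \<open>the G-orthogonal of v is the hyperplane r . x = 0\<close>
  define r where "r = transpose_mat G *\<^sub>v v"
  have r: "r \<in> carrier_vec d" unfolding r_def using G v(1) by simp
  have rx: "r \<bullet> x = v \<bullet> (G *\<^sub>v x)" if "x \<in> carrier_vec d" for x
    using transpose_vec_mult_scalar[OF G that v(1)] unfolding r_def .
  obtain R where "R \<in> carrier_mat d (d - 2)" "inj_mat (mat_of_cols d [v] @\<^sub>c R)"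
    "\<forall>y \<in> carrier_vec (d - 2). r \<bullet> (R *\<^sub>v y) = 0"
    using complement_in_hyperplane[OF r v(1-3)] rx[OF v(1)] v(4) d by auto
  thus ?thesis using v(1,4) rx by (intro exI[of _ v] exI[of _ R]) auto
qed

lemma totally_isotropic_subspace_exists:
  fixes G :: "complex mat"
  assumes "G \<in> carrier_mat d d" "sym_or_skew G"
  shows "\<exists>Q \<in> carrier_mat d (d div 2). inj_mat Q \<and> totally_isotropic G Q"
  using assms
proof (induction d arbitrary: G rule: less_induct)
  case (less d)
  note G = less(2,3)
  show ?case
  proof (cases "d < 2")
    case True
    have "inj_mat (0\<^sub>m d 0 :: complex mat)" by (rule inj_matI[of _ d 0]) auto
    moreover have "totally_isotropic G (0\<^sub>m d 0)" unfolding totally_isotropic_def by auto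
    ultimately show ?thesis using True by (intro bexI[of _ "0\<^sub>m d 0"]) auto
  next
    case False
    hence d: "2 \<le> d" by simp
    obtain v R where v: "v \<in> carrier_vec d" "v \<bullet> (G *\<^sub>v v) = 0"
      and R: "R \<in> carrier_mat d (d - 2)" "inj_mat (mat_of_cols d [v] @\<^sub>c R)"
        "\<And>y. y \<in> carrier_vec (d - 2) \<Longrightarrow> v \<bullet> (G *\<^sub>v (R *\<^sub>v y)) = 0"
      using isotropic_vec_with_complement[OF G(1) d] by blast
    define G' where "G' = transpose_mat R * G * R"
    have G': "G' \<in> carrier_mat (d - 2) (d - 2)" "sym_or_skew G'"
      unfolding G'_def using R(1) G(1) sym_or_skew_congruence[OF R(1) G] by auto
    obtain Q' where Q': "Q' \<in> carrier_mat (d - 2) ((d - 2) div 2)" "inj_mat Q'" "totally_isotropic G' Q'"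
      using less.IH[OF _ G'] d by auto
    have dd: "d div 2 = 1 + (d - 2) div 2" using d by simp
    have RQ': "R * Q' \<in> carrier_mat d ((d - 2) div 2)" using R(1) Q'(1) by simp
    define Q where "Q = mat_of_cols d [v] @\<^sub>c (R * Q')"
    have "Q \<in> carrier_mat d (d div 2)"
      unfolding Q_def dd by (rule append_cols_carrier[OF mat_of_single_col_carrier RQ'])
    moreover have "inj_mat Q"
      unfolding Q_def by (rule inj_mat_append_cols_mult[OF mat_of_single_col_carrier R(1) Q'(1) R(2) Q'(2)])
    moreover have "totally_isotropic G Q"
    proof -
      have "totally_isotropic G (R * Q')"
        using Q'(3) totally_isotropic_congruence[OF R(1) Q'(1) G(1)] unfolding G'_def by simp
      moreover have "v \<bullet> (G *\<^sub>v col (R * Q') b) = 0" if "b < (d - 2) div 2" for b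
        using R(3)[of "col Q' b"] col_mult2[OF R(1) Q'(1) that] Q'(1) that by (simp del: col_mult)
      ultimately show ?thesis
        unfolding Q_def using totally_isotropic_prepend_col[OF G v RQ'] by blast
    qed
    ultimately show ?thesis by blast
  qed
qed

lemma common_totally_isotropic_subspace:
  fixes P :: "complex mat" and M :: "nat \<Rightarrow> complex mat"
  assumes "P \<in> carrier_mat N (2 ^ s * l)"
    and "\<And>i. i < s \<Longrightarrow> M i \<in> carrier_mat N N" "\<And>i. i < s \<Longrightarrow> sym_or_skew (M i)"
  shows "\<exists>R \<in> carrier_mat (2 ^ s * l) l. inj_mat R \<and> (\<forall>i<s. totally_isotropic (M i) (P * R))"
  using assms
proof (induction s arbitrary: P M)
  case 0
  have "inj_mat (1\<^sub>m l :: complex mat)" by (rule inj_matI[of _ l l]) auto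
  thus ?case by (intro bexI[of _ "1\<^sub>m l"]) auto
next
  case (Suc s)
  note P = Suc.prems(1) and M = Suc.prems(2,3)
  have G: "transpose_mat P * M 0 * P \<in> carrier_mat (2 ^ Suc s * l) (2 ^ Suc s * l)"
    "sym_or_skew (transpose_mat P * M 0 * P)"
    using P M[of 0] sym_or_skew_congruence[OF P] by auto
  have "2 ^ Suc s * l div 2 = 2 ^ s * l" by simp
  then obtain Q where Q: "Q \<in> carrier_mat (2 ^ Suc s * l) (2 ^ s * l)" "inj_mat Q"
    "totally_isotropic (transpose_mat P * M 0 * P) Q"
    using totally_isotropic_subspace_exists[OF G] by auto
  have PQ: "P * Q \<in> carrier_mat N (2 ^ s * l)" using P Q(1) by simp
  obtain R where R: "R \<in> carrier_mat (2 ^ s * l) l" "inj_mat R"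
    "\<forall>i<s. totally_isotropic (M (Suc i)) (P * Q * R)"
    using Suc.IH[OF PQ, of "\<lambda>i. M (Suc i)"] M by auto
  have PQR: "P * (Q * R) = P * Q * R" using P Q(1) R(1) by simp
  have "totally_isotropic (M 0) (P * Q)"
    using Q(3) totally_isotropic_congruence[OF P Q(1) M(1)[of 0]] by simp
  hence "totally_isotropic (M 0) (P * Q * R)"
    using totally_isotropic_mult[OF PQ R(1)] M(1)[of 0] by simp
  hence "\<forall>i<Suc s. totally_isotropic (M i) (P * (Q * R))"
    using R(3) unfolding PQR by (auto simp: less_Suc_eq_0_disj)
  moreover have "inj_mat (Q * R)" by (rule inj_mat_mult[OF Q(1) R(1) Q(2) R(2)])
  moreover have "Q * R \<in> carrier_mat (2 ^ Suc s * l) l" using Q(1) R(1) by simp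
  ultimately show ?case by blast
qed

section \<open>Block rows of matrices\<close>

text \<open>The N \<times> s m matrix [Ys 0 | ... | Ys (s - 1)].\<close>

definition block_row_mat :: "nat \<Rightarrow> nat \<Rightarrow> (nat \<Rightarrow> 'a mat) \<Rightarrow> nat \<Rightarrow> 'a mat" where
  "block_row_mat N m Ys s = mat N (s * m) (\<lambda>(r,c). Ys (c div m) $$ (r, c mod m))"

definition vec_block :: "nat \<Rightarrow> nat \<Rightarrow> 'a vec \<Rightarrow> 'a vec" where
  "vec_block m i y = vec m (\<lambda>a. y $ (i * m + a))"

definition vec_of_blocks :: "nat \<Rightarrow> nat \<Rightarrow> (nat \<Rightarrow> 'a vec) \<Rightarrow> 'a vec" where
  "vec_of_blocks m s ys = vec (s * m) (\<lambda>c. ys (c div m) $ (c mod m))"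

lemma block_row_mat_carrier[simp]: "block_row_mat N m Ys s \<in> carrier_mat N (s * m)"
  and dim_block_row_mat[simp]: "dim_row (block_row_mat N m Ys s) = N" "dim_col (block_row_mat N m Ys s) = s * m"
  unfolding block_row_mat_def by simp_all

lemma vec_block_carrier[simp]: "vec_block m i y \<in> carrier_vec m"
  unfolding vec_block_def by simp

lemma vec_of_blocks_carrier[simp]: "vec_of_blocks m s ys \<in> carrier_vec (s * m)"
  unfolding vec_of_blocks_def by simp

lemma block_index_less:
  fixes i a s m :: nat
  assumes "i < s" "a < m"
  shows "i * m + a < s * m"
proof -
  have "i * m + a < (i + 1) * m" using assms by simp
  also have "\<dots> \<le> s * m" using assms by (intro mult_le_mono1) simp
  finally show ?thesis .
qed

lemma vec_block_of_blocks:
  assumes "i < s" "ys i \<in> carrier_vec m"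
  shows "vec_block m i (vec_of_blocks m s ys) = ys i"
  by (rule eq_vecI) (use assms block_index_less[OF assms(1)] in \<open>auto simp: vec_block_def vec_of_blocks_def\<close>)

lemma vec_of_blocks_vec_block:
  assumes "x \<in> carrier_vec (s * m)"
  shows "vec_of_blocks m s (\<lambda>i. vec_block m i x) = x"
proof (rule eq_vecI)
  fix c assume "c < dim_vec x"
  hence "c < s * m" using assms by simp
  hence "c mod m < m" by (cases m) auto
  thus "vec_of_blocks m s (\<lambda>i. vec_block m i x) $ c = x $ c"
    using \<open>c < s * m\<close> by (simp add: vec_of_blocks_def vec_block_def mult.commute)
qed (use assms in \<open>simp add: vec_of_blocks_def\<close>)

lemma vec_block_zero: "i < s \<Longrightarrow> vec_block m i (0\<^sub>v (s * m)) = 0\<^sub>v m"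
  by (rule eq_vecI) (auto simp: vec_block_def block_index_less)

lemma vec_eq_zero_if_blocks_zero:
  assumes y: "y \<in> carrier_vec (s * m)" and "\<And>i. i < s \<Longrightarrow> vec_block m i y = 0\<^sub>v m"
  shows "y = 0\<^sub>v (s * m)"
proof (rule eq_vecI)
  fix c assume "c < dim_vec (0\<^sub>v (s * m))"
  hence c: "c < s * m" by simp
  hence "0 < m" by (cases m) auto
  hence "c div m < s" "c mod m < m" using c by (auto simp: less_mult_imp_div_less)
  hence "vec_block m (c div m) y $ (c mod m) = 0" using assms(2) by simp
  thus "y $ c = 0\<^sub>v (s * m) $ c" using c \<open>c mod m < m\<close> by (simp add: vec_block_def mult.commute)
qed (use y in simp)

lemma sum_blocks:
  fixes f :: "nat \<Rightarrow> 'a::comm_monoid_add"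
  shows "(\<Sum>c\<in>{0..<s * m}. f c) = (\<Sum>i\<in>{0..<s}. \<Sum>a\<in>{0..<m}. f (i * m + a))"
proof -
  have "(\<Sum>c\<in>{0..<s * m}. f c) = (\<Sum>i<s. sum f {i * m..<i * m + m})"
    using sum.nat_group[of f m s] by (simp add: lessThan_atLeast0)
  also have "\<dots> = (\<Sum>i<s. \<Sum>a\<in>{0..<m}. f (i * m + a))"
    using sum.shift_bounds_nat_ivl[of f 0 "i * m" m for i] by (simp add: add.commute)
  finally show ?thesis by (simp add: lessThan_atLeast0)
qed

lemma block_row_mat_mult_vec:
  assumes Y: "\<And>i. i < s \<Longrightarrow> Ys i \<in> carrier_mat N m" and y: "y \<in> carrier_vec (s * m)"
  shows "block_row_mat N m Ys s *\<^sub>v y = vec N (\<lambda>r. \<Sum>i\<in>{0..<s}. (Ys i *\<^sub>v vec_block m i y) $ r)"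
proof (rule eq_vecI)
  fix r assume "r < dim_vec (vec N (\<lambda>r. \<Sum>i\<in>{0..<s}. (Ys i *\<^sub>v vec_block m i y) $ r))"
  hence r: "r < N" by simp
  have "(block_row_mat N m Ys s *\<^sub>v y) $ r = (\<Sum>c\<in>{0..<s * m}. Ys (c div m) $$ (r, c mod m) * y $ c)"
    using r y by (simp add: block_row_mat_def scalar_prod_def)
  also have "\<dots> = (\<Sum>i\<in>{0..<s}. \<Sum>a\<in>{0..<m}. Ys i $$ (r, a) * y $ (i * m + a))"
    unfolding sum_blocks by (intro sum.cong) auto
  also have "\<dots> = (\<Sum>i\<in>{0..<s}. (Ys i *\<^sub>v vec_block m i y) $ r)"
  proof (rule sum.cong[OF refl])
    fix i assume "i \<in> {0..<s}"
    thus "(\<Sum>a\<in>{0..<m}. Ys i $$ (r, a) * y $ (i * m + a)) = (Ys i *\<^sub>v vec_block m i y) $ r"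
      using Y[of i] r by (simp add: scalar_prod_def vec_block_def)
  qed
  finally show "(block_row_mat N m Ys s *\<^sub>v y) $ r = vec N (\<lambda>r. \<Sum>i\<in>{0..<s}. (Ys i *\<^sub>v vec_block m i y) $ r) $ r"
    using r by simp
qed (simp add: block_row_mat_def)

lemma col_block_row_mat:
  assumes "Ys i \<in> carrier_mat N m" "i < s" "a < m"
  shows "col (block_row_mat N m Ys s) (i * m + a) = col (Ys i) a"
  by (rule eq_vecI) (use assms block_index_less[OF assms(2,3)] in \<open>auto simp: block_row_mat_def\<close>)

lemma inj_block_row_mat_mult_right:
  fixes R :: "'a::field mat"
  assumes inj: "inj_mat (block_row_mat N n Ys s)" and Y: "\<And>i. i < s \<Longrightarrow> Ys i \<in> carrier_mat N n"
    and R: "R \<in> carrier_mat n l" "inj_mat R" and Z: "\<And>i. i < s \<Longrightarrow> Zs i = Ys i * R"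
  shows "inj_mat (block_row_mat N l Zs s)"
proof (rule inj_matI[OF block_row_mat_carrier])
  fix x assume x: "x \<in> carrier_vec (s * l)" and "block_row_mat N l Zs s *\<^sub>v x = 0\<^sub>v N"
  define y where "y = vec_of_blocks n s (\<lambda>i. R *\<^sub>v vec_block l i x)"
  have y: "vec_block n i y = R *\<^sub>v vec_block l i x" if "i < s" for i
    unfolding y_def using vec_block_of_blocks[OF that, of "\<lambda>i. R *\<^sub>v vec_block l i x"] R(1) by simp
  have Zc: "Zs i \<in> carrier_mat N l" if "i < s" for i using Z[OF that] Y[OF that] R(1) by simp
  have "block_row_mat N n Ys s *\<^sub>v y = vec N (\<lambda>r. \<Sum>i\<in>{0..<s}. (Ys i *\<^sub>v vec_block n i y) $ r)"
    unfolding y_def by (rule block_row_mat_mult_vec[OF Y vec_of_blocks_carrier])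
  also have "\<dots> = vec N (\<lambda>r. \<Sum>i\<in>{0..<s}. (Zs i *\<^sub>v vec_block l i x) $ r)"
  proof -
    have "Ys i *\<^sub>v vec_block n i y = Zs i *\<^sub>v vec_block l i x" if "i < s" for i
      using Y[OF that] R(1) Z[OF that] y[OF that] by simp
    thus ?thesis by (intro arg_cong[where f = "vec N"] ext sum.cong) simp_all
  qed
  also have "\<dots> = block_row_mat N l Zs s *\<^sub>v x" by (rule block_row_mat_mult_vec[OF Zc x, symmetric])
  also have "\<dots> = 0\<^sub>v N" by fact
  finally have "y = 0\<^sub>v (s * n)" using inj_matD[OF inj block_row_mat_carrier] y_def by simp
  hence "R *\<^sub>v vec_block l i x = 0\<^sub>v n" if "i < s" for i using y[OF that] vec_block_zero[OF that, of n] by metis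
  hence "vec_block l i x = 0\<^sub>v l" if "i < s" for i using inj_matD[OF R(2,1)] that by simp
  thus "x = 0\<^sub>v (s * l)" by (rule vec_eq_zero_if_blocks_zero[OF x])
qed

section \<open>The sum of the images\<close>

lemma (in vec_space) inj_mat_if_lin_indpt_cols:
  assumes K: "K \<in> carrier_mat n m" and "distinct (cols K)" "lin_indpt (set (cols K))"
  shows "inj_mat K"
proof (rule inj_matI[OF K])
  fix v assume v: "v \<in> carrier_vec m" and "K *\<^sub>v v = 0\<^sub>v n"
  show "v = 0\<^sub>v m"
  proof (rule ccontr)
    assume "v \<noteq> 0\<^sub>v m"
    from lin_depI[OF K v this \<open>K *\<^sub>v v = 0\<^sub>v n\<close> \<open>distinct (cols K)\<close>] assms(3) show False by simp
  qed
qed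

lemma (in vec_space) inj_mat_if_full_rank:
  assumes K: "K \<in> carrier_mat n m" and r: "rank K = m"
  shows "inj_mat K"
proof -
  have fin: "finite T \<and> card T \<le> card (set (cols K))" if "T \<subseteq> set (cols K) \<and> lin_indpt T" for T
    using that by (meson List.finite_set card_mono rev_finite_subset)
  obtain S where S: "finite S" "maximal S (\<lambda>T. T \<subseteq> set (cols K) \<and> lin_indpt T)"
    using maximal_exists[of "\<lambda>T. T \<subseteq> set (cols K) \<and> lin_indpt T" "card (set (cols K))" "{}", OF fin]
    unfolding lin_dep_def by auto
  have "m \<le> card (set (cols K))"
    using rank_card_indpt[OF K S(2)] r S(2) unfolding maximal_def by (simp add: card_mono)
  hence "distinct (cols K)"
    using K card_length[of "cols K"] card_distinct by (metis cols_length le_antisym carrier_matD(2))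
  thus ?thesis using inj_mat_if_lin_indpt_cols[OF K] full_rank_lin_indpt[OF K r] by blast
qed

lemma (in vec_space) subspace_basis_list:
  assumes W: "subspace class_ring W V" and dim: "vectorspace.dim class_ring (V\<lparr>carrier := W\<rparr>) = k"
  shows "\<exists>bs. length bs = k \<and> distinct bs \<and> set bs \<subseteq> W \<and> lin_indpt (set bs) \<and> span (set bs) = W"
proof -
  have sub: "submodule class_ring W V" using W unfolding subspace_def by auto
  hence Wn: "W \<subseteq> carrier_vec n" unfolding submodule_def by auto
  define WW where "WW = V\<lparr>carrier := W\<rparr>"
  interpret WW: vectorspace class_ring WW unfolding WW_def by (rule subspace_is_vs[OF W])
  have cWW: "carrier WW = W" unfolding WW_def by simp
  have lin_dep: "WW.lin_dep S = lin_dep S" and span: "WW.span S = span S" if "S \<subseteq> W" for S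
    unfolding WW_def using span_li_not_depend[OF that sub] by auto
  have bound: "finite S \<and> card S \<le> n" if "S \<subseteq> carrier WW \<and> WW.lin_indpt S" for S
    using li_le_dim[OF fin_dim, of S] dim_is_n that lin_dep cWW Wn by auto
  obtain A where A: "finite A" "maximal A (\<lambda>S. S \<subseteq> carrier WW \<and> WW.lin_indpt S)"
    using maximal_exists[of "\<lambda>S. S \<subseteq> carrier WW \<and> WW.lin_indpt S" n "{}", OF bound]
    unfolding WW.lin_dep_def by auto
  have bA: "WW.basis A" by (rule WW.max_li_is_basis[OF A(2)])
  have AW: "A \<subseteq> W" using bA cWW unfolding WW.basis_def by auto
  obtain bs where bs: "set bs = A" "distinct bs" using finite_distinct_list[OF A(1)] by auto
  moreover have "length bs = k"
    using distinct_card[OF bs(2)] bs(1) WW.dim_basis[OF A(1) bA] dim unfolding WW_def by simp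
  ultimately show ?thesis
    using bA lin_dep[OF AW] span[OF AW] cWW AW unfolding WW.basis_def by auto
qed

lemma csubspace_basis_mat:
  assumes "csubspace N V" and "cdim N V = n"
  shows "\<exists>P \<in> carrier_mat N n. inj_mat P \<and> V = (\<lambda>y. P *\<^sub>v y) ` carrier_vec n"
proof -
  interpret VS: vec_space "TYPE(complex)" N .
  obtain bs where bs: "length bs = n" "distinct bs" "set bs \<subseteq> V" "VS.lin_indpt (set bs)"
    "VS.span (set bs) = V"
    using VS.subspace_basis_list assms unfolding csubspace_def cdim_def by blast
  have VN: "V \<subseteq> carrier_vec N"
    using assms(1) unfolding csubspace_def subspace_def submodule_def by auto
  define P where "P = mat_of_cols N bs"
  have P: "P \<in> carrier_mat N n" unfolding P_def using bs(1) by auto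
  have cP: "cols P = bs" unfolding P_def using bs(3) VN by simp
  have "inj_mat P" using VS.inj_mat_if_lin_indpt_cols[OF P] bs(2,4) cP by simp
  moreover have "V = (\<lambda>y. P *\<^sub>v y) ` carrier_vec n"
    using VS.col_space_eq[OF P] P bs(5) unfolding VS.col_space_def cP by auto
  ultimately show ?thesis using P by blast
qed

lemma foldr_map2_mult_mat_vec:
  fixes Ms :: "'a::semiring_0 mat list"
  assumes "length vs = length Ms" "\<And>i. i < length Ms \<Longrightarrow> Ms ! i \<in> carrier_mat N N"
    "\<And>i. i < length Ms \<Longrightarrow> vs ! i \<in> carrier_vec N"
  shows "foldr (+) (map2 (\<lambda>A v. A *\<^sub>v v) Ms vs) (0\<^sub>v N) =
           vec N (\<lambda>r. \<Sum>i\<in>{0..<length Ms}. (Ms ! i *\<^sub>v vs ! i) $ r)"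
  using assms
proof (induction Ms arbitrary: vs)
  case Nil
  thus ?case by (intro eq_vecI) auto
next
  case (Cons M Ms)
  then obtain v vs' where vs: "vs = v # vs'" by (cases vs) auto
  have IH: "foldr (+) (map2 (\<lambda>A v. A *\<^sub>v v) Ms vs') (0\<^sub>v N) =
              vec N (\<lambda>r. \<Sum>i\<in>{0..<length Ms}. (Ms ! i *\<^sub>v vs' ! i) $ r)"
    using Cons.prems(1) Cons.prems(2,3)[of "Suc i" for i] vs by (intro Cons.IH) auto
  have "M \<in> carrier_mat N N" using Cons.prems(2)[of 0] by simp
  thus ?case unfolding vs
    by (intro eq_vecI) (auto simp: IH sum.atLeast0_lessThan_Suc_shift simp del: sum.op_ivl_Suc)
qed

lemma img_sum_memI:
  "length vs = length Ms \<Longrightarrow> set vs \<subseteq> V \<Longrightarrow>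
     foldr (+) (map2 (\<lambda>A v. A *\<^sub>v v) Ms vs) (0\<^sub>v N) \<in> img_sum N Ms V"
  unfolding img_sum_def by blast

lemma img_sum_eq_image:
  assumes P: "P \<in> carrier_mat N n" and V: "V = (\<lambda>y. P *\<^sub>v y) ` carrier_vec n"
    and M: "\<And>i. i < length Ms \<Longrightarrow> Ms ! i \<in> carrier_mat N N"
  shows "img_sum N Ms V =
           (\<lambda>x. block_row_mat N n (\<lambda>i. Ms ! i * P) (length Ms) *\<^sub>v x) ` carrier_vec (length Ms * n)"
    (is "_ = (\<lambda>x. ?K *\<^sub>v x) ` carrier_vec (?s * n)")
proof -
  have MP: "Ms ! i * P \<in> carrier_mat N n" if "i < ?s" for i using M[OF that] P by simp
  have sum_eq: "foldr (+) (map2 (\<lambda>A v. A *\<^sub>v v) Ms (map (\<lambda>i. P *\<^sub>v ys i) [0..<?s])) (0\<^sub>v N) =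
      ?K *\<^sub>v vec_of_blocks n ?s ys" if ys: "\<And>i. i < ?s \<Longrightarrow> ys i \<in> carrier_vec n" for ys
  proof -
    have "foldr (+) (map2 (\<lambda>A v. A *\<^sub>v v) Ms (map (\<lambda>i. P *\<^sub>v ys i) [0..<?s])) (0\<^sub>v N) =
        vec N (\<lambda>r. \<Sum>i\<in>{0..<?s}. (Ms ! i *\<^sub>v (P *\<^sub>v ys i)) $ r)"
      using foldr_map2_mult_mat_vec[OF _ M, of "map (\<lambda>i. P *\<^sub>v ys i) [0..<?s]"] P ys by auto
    also have "\<dots> = vec N (\<lambda>r. \<Sum>i\<in>{0..<?s}. ((Ms ! i * P) *\<^sub>v vec_block n i (vec_of_blocks n ?s ys)) $ r)"
    proof -
      have "Ms ! i *\<^sub>v (P *\<^sub>v ys i) = (Ms ! i * P) *\<^sub>v vec_block n i (vec_of_blocks n ?s ys)"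
        if "i < ?s" for i
        using M[OF that] P ys[OF that] vec_block_of_blocks[OF that, of ys] by simp
      thus ?thesis by (intro arg_cong[where f = "vec N"] ext sum.cong) simp_all
    qed
    also have "\<dots> = ?K *\<^sub>v vec_of_blocks n ?s ys"
      by (rule block_row_mat_mult_vec[OF MP vec_of_blocks_carrier, symmetric])
    finally show ?thesis .
  qed
  show ?thesis
  proof (intro equalityI subsetI)
    fix z assume "z \<in> img_sum N Ms V"
    then obtain vs where vs: "z = foldr (+) (map2 (\<lambda>A v. A *\<^sub>v v) Ms vs) (0\<^sub>v N)"
      "length vs = ?s" "set vs \<subseteq> V"
      unfolding img_sum_def by blast
    define ys where "ys i = (SOME y. y \<in> carrier_vec n \<and> vs ! i = P *\<^sub>v y)" for i
    have ys: "ys i \<in> carrier_vec n \<and> vs ! i = P *\<^sub>v ys i" if "i < ?s" for i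
    proof -
      have "vs ! i \<in> set vs" using vs(2) that by simp
      hence "vs ! i \<in> V" using vs(3) by blast
      hence "\<exists>y. y \<in> carrier_vec n \<and> vs ! i = P *\<^sub>v y" unfolding V by blast
      thus ?thesis unfolding ys_def by (rule someI_ex)
    qed
    have "vs = map (\<lambda>i. P *\<^sub>v ys i) [0..<?s]" using vs(2) ys by (intro nth_equalityI) auto
    hence "z = foldr (+) (map2 (\<lambda>A v. A *\<^sub>v v) Ms (map (\<lambda>i. P *\<^sub>v ys i) [0..<?s])) (0\<^sub>v N)"
      using vs(1) by simp
    also have "\<dots> = ?K *\<^sub>v vec_of_blocks n ?s ys" using ys by (intro sum_eq) blast
    finally show "z \<in> (\<lambda>x. ?K *\<^sub>v x) ` carrier_vec (?s * n)" by (rule image_eqI[OF _ vec_of_blocks_carrier])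
  next
    fix z assume "z \<in> (\<lambda>x. ?K *\<^sub>v x) ` carrier_vec (?s * n)"
    then obtain x where x: "x \<in> carrier_vec (?s * n)" "z = ?K *\<^sub>v x" by blast
    define vs where "vs = map (\<lambda>i. P *\<^sub>v vec_block n i x) [0..<?s]"
    have "z = foldr (+) (map2 (\<lambda>A v. A *\<^sub>v v) Ms vs) (0\<^sub>v N)"
      unfolding vs_def sum_eq[of "\<lambda>i. vec_block n i x", OF vec_block_carrier]
      vec_of_blocks_vec_block[OF x(1)] by (rule x(2))
    moreover have "foldr (+) (map2 (\<lambda>A v. A *\<^sub>v v) Ms vs) (0\<^sub>v N) \<in> img_sum N Ms V"
      by (rule img_sum_memI) (auto simp: vs_def V)
    ultimately show "z \<in> img_sum N Ms V" by simp
  qed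
qed

lemma inj_block_row_mat_if_img_sum_full:
  assumes P: "P \<in> carrier_mat N n" and V: "V = (\<lambda>y. P *\<^sub>v y) ` carrier_vec n"
    and M: "\<And>i. i < length Ms \<Longrightarrow> Ms ! i \<in> carrier_mat N N"
    and dim: "cdim N (img_sum N Ms V) = length Ms * n"
  shows "inj_mat (block_row_mat N n (\<lambda>i. Ms ! i * P) (length Ms))" (is "inj_mat ?K")
proof -
  interpret VS: vec_space "TYPE(complex)" N .
  have "img_sum N Ms V = VS.col_space ?K"
    using img_sum_eq_image[OF P V M] VS.col_space_eq[OF block_row_mat_carrier]
      mult_mat_vec_carrier[OF block_row_mat_carrier] by auto
  hence "VS.rank ?K = length Ms * n" using dim unfolding cdim_def VS.rank_def VS.col_space_def by simp
  thus ?thesis by (rule VS.inj_mat_if_full_rank[OF block_row_mat_carrier])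
qed

section \<open>The normal form\<close>

lemma transpose_block_row_mat_mult_isotropic:
  fixes U :: "'a::comm_ring mat"
  assumes U: "U \<in> carrier_mat N l" and M: "\<And>i. i < s \<Longrightarrow> M i \<in> carrier_mat N N"
    and iso: "\<And>i. i < s \<Longrightarrow> totally_isotropic (M i) U"
  shows "transpose_mat (block_row_mat N l (\<lambda>i. M i * U) s) * U = 0\<^sub>m (s * l) l"
proof (rule eq_matI)
  fix b a assume "b < dim_row (0\<^sub>m (s * l) l)" "a < dim_col (0\<^sub>m (s * l) l)"
  hence b: "b < s * l" and a: "a < l" by auto
  define i c where "i = b div l" and "c = b mod l"
  have ic: "i < s" "c < l" "b = i * l + c"
    using b a unfolding i_def c_def by (auto simp: less_mult_imp_div_less)
  have "(transpose_mat (block_row_mat N l (\<lambda>i. M i * U) s) * U) $$ (b, a) =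
      col (M i * U) c \<bullet> col U a"
    using col_block_row_mat[of "\<lambda>i. M i * U" i N l s c] M[OF ic(1)] U ic a b by (simp del: col_mult)
  also have "\<dots> = col U a \<bullet> (M i *\<^sub>v col U c)"
    using M[OF ic(1)] U ic(2) a by (simp add: comm_scalar_prod[of _ N] del: col_mult)
  also have "\<dots> = 0" using iso[OF ic(1)] totally_isotropic_iff_cols[OF U M[OF ic(1)]] a ic(2) by blast
  finally show "(transpose_mat (block_row_mat N l (\<lambda>i. M i * U) s) * U) $$ (b, a) = 0\<^sub>m (s * l) l $$ (b, a)"
    using a b by simp
qed (use U in auto)

lemma congruence_normal_form:
  fixes U :: "'a::field mat" and M :: "nat \<Rightarrow> 'a mat"
  assumes U: "U \<in> carrier_mat N l" "inj_mat U" and M: "\<And>i. i < s \<Longrightarrow> M i \<in> carrier_mat N N"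
    and iso: "\<And>i. i < s \<Longrightarrow> totally_isotropic (M i) U"
    and W: "inj_mat (block_row_mat N l (\<lambda>i. M i * U) s)"
  shows "\<exists>g \<in> carrier_mat N N. invertible_mat g \<and> (\<forall>i<s. \<forall>r<N. \<forall>c<l.
           (g * M i * transpose_mat g) $$ (r, c) = (if r = l + (i * l + c) then 1 else 0))"
proof -
  let ?W = "block_row_mat N l (\<lambda>i. M i * U) s"
  obtain H where H: "H \<in> carrier_mat N N" "inj_mat H" "\<And>c. c < l \<Longrightarrow> col H c = col U c"
    "\<And>a r. a < s * l \<Longrightarrow> r < N \<Longrightarrow> (transpose_mat ?W * H) $$ (a, r) = (if r = l + a then 1 else 0)"
    using adapted_basis[OF U block_row_mat_carrier W transpose_block_row_mat_mult_isotropic[OF U(1) M iso]]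
    by blast
  have "invertible_mat (transpose_mat H)"
    using H(1,2) inj_mat_iff_det_nonzero[OF H(1)] det_transpose[OF H(1)]
    by (intro invertible_mat_if_det_nonzero[of _ N]) auto
  moreover have "(transpose_mat H * M i * H) $$ (r, c) = (if r = l + (i * l + c) then 1 else 0)"
    if i: "i < s" and r: "r < N" and c: "c < l" for i r c
  proof -
    have ilc: "i * l + c < s * l" by (rule block_index_less[OF i c])
    have "(transpose_mat H * M i * H) $$ (r, c) = col H r \<bullet> (M i *\<^sub>v col U c)"
      using congruence_index[OF H(1) M[OF i] r] H(3)[OF c] c U(1) inj_mat_dim_le[OF U] by auto
    also have "\<dots> = col ?W (i * l + c) \<bullet> col H r"
      using col_block_row_mat[of "\<lambda>i. M i * U" i N l s c] M[OF i] U(1) H(1) i c r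
      by (simp add: comm_scalar_prod[of _ N] del: col_mult)
    also have "\<dots> = (transpose_mat ?W * H) $$ (i * l + c, r)" using H(1) ilc r by simp
    finally show ?thesis using H(4)[OF ilc r] by simp
  qed
  ultimately show ?thesis using H(1) by (intro bexI[of _ "transpose_mat H"]) auto
qed

lemma block_position_iff:
  fixes r i l c :: nat
  assumes "c < l"
  shows "r = l + (i * l + c) \<longleftrightarrow> (i + 1) * l \<le> r \<and> r < (i + 2) * l \<and> r - (i + 1) * l = c"
  using assms by (auto simp: algebra_simps)

theorem lemma3p7:
  fixes p q l N :: nat and Ms :: "complex mat list" and V :: "complex vec set"
  assumes len: "length Ms = p + q"
    and sq: "\<forall>i < p + q. Ms ! i \<in> carrier_mat N N"
    and sym: "\<forall>i < p. transpose_mat (Ms ! i) = Ms ! i"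
    and alt: "\<forall>i. p \<le> i \<and> i < p + q \<longrightarrow> transpose_mat (Ms ! i) = - (Ms ! i)"
    and V: "csubspace N V" "cdim N V = 2 ^ (p + q) * l"
    and sumdim: "cdim N (img_sum N Ms V) = (p + q) * 2 ^ (p + q) * l"
  shows "\<exists>g \<in> carrier_mat N N. invertible_mat g \<and>
           (\<forall>i < p + q. \<forall>r < N. \<forall>c < l.
              (g * (Ms ! i) * transpose_mat g) $$ (r, c) =
                (if (i + 1) * l \<le> r \<and> r < (i + 2) * l \<and> r - (i + 1) * l = c then 1 else 0))"
proof -
  let ?s = "p + q" and ?n = "2 ^ (p + q) * l"
  have M: "Ms ! i \<in> carrier_mat N N" "sym_or_skew (Ms ! i)" if "i < ?s" for i
    using that sq sym alt unfolding sym_or_skew_def by (metis not_le)+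
  obtain P where P: "P \<in> carrier_mat N ?n" "inj_mat P" "V = (\<lambda>y. P *\<^sub>v y) ` carrier_vec ?n"
    using csubspace_basis_mat[OF V] by blast
  have "inj_mat (block_row_mat N ?n (\<lambda>i. Ms ! i * P) (length Ms))"
    by (rule inj_block_row_mat_if_img_sum_full[OF P(1,3)]) (use M(1) sumdim len in \<open>auto simp: mult.assoc\<close>)
  hence K: "inj_mat (block_row_mat N ?n (\<lambda>i. Ms ! i * P) ?s)" using len by simp
  obtain R where R: "R \<in> carrier_mat ?n l" "inj_mat R" "\<forall>i<?s. totally_isotropic (Ms ! i) (P * R)"
    using common_totally_isotropic_subspace[OF P(1), of "\<lambda>i. Ms ! i"] M by blast
  have "inj_mat (block_row_mat N l (\<lambda>i. Ms ! i * (P * R)) ?s)"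
    by (rule inj_block_row_mat_mult_right[OF K _ R(1,2)]) (use M(1) P(1) assoc_mult_mat[OF M(1) P(1) R(1)] in \<open>auto intro: mult_carrier_mat\<close>)
  then obtain g where "g \<in> carrier_mat N N" "invertible_mat g" "\<forall>i<?s. \<forall>r<N. \<forall>c<l.
      (g * Ms ! i * transpose_mat g) $$ (r, c) = (if r = l + (i * l + c) then 1 else 0)"
    using congruence_normal_form[of "P * R" N l ?s "\<lambda>i. Ms ! i"] inj_mat_mult[OF P(1) R(1) P(2) R(2)]
      P(1) R M(1) by auto
  thus ?thesis using block_position_iff by auto
qed

end
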